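(* Under the hypotheses of the weak-convergence result for the gossip model with heterogeneous influential environment (constants $\alpha\in[0,1)$, $\omega\in[0,1]$, $\upsilon\in(0,1]$, exponential moment bounds on $\mu_0$ and $\psi$), let $\mu_\infty$ be the weak limit of $\mu_t$ as $t\to\infty$. If $\psi\ll\lambda$, then $\mu_\infty\ll\lambda$.
   Context: $\mathcal X\subseteq\mathbb R^d$ convex open, $\lambda$ Lebesgue measure, $\ll$ absolute continuity. The kernel is $\int\varphi\,d\kappa(\cdot|x,y)=\alpha\varphi((1-\omega)x+\omega y)+(1-\alpha)\int\varphi((1-\upsilon)x+\upsilon z)\,d\psi(z)$ with $\psi\in\mathcal P(\mathcal X)$; the moment bounds are $\sup_k(\int|x|^kd\mu_0)^{1/k}<\infty$ and $\sup_k(\int|x|^kd\psi)^{1/k}<\infty$. $\{\mu_t\}$ is the (unique) weak solution of $\frac{d}{dt}\mu_t=F(\mu_t)-\mu_t$ from $\mu_0$, with $F(\mu)(B)=\int\!\!\int\kappa(B|x,y)d\mu(x)d\mu(y)$; under these hypotheses $\mu_t$ converges weakly to a probability measure $\mu_\infty$. *)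

theory Defs
  imports "HOL-Probability.Probability"
begin

text \<open>Probability measures on the convex open set X, realised as Borel probability
  measures on the ambient Euclidean space that give full mass to X.\<close>
definition prob_on :: "'a::euclidean_space set \<Rightarrow> 'a measure \<Rightarrow> bool" where
  "prob_on X M \<longleftrightarrow> prob_space M \<and> sets M = sets borel \<and> emeasure M X = 1"

text \<open>Test functions: bounded continuous functions on X (any such function extends
  Borel-measurably to the whole space, the extension being irrelevant).\<close>
definition cb_test :: "'a::euclidean_space set \<Rightarrow> ('a \<Rightarrow> real) \<Rightarrow> bool" where
  "cb_test X phi \<longleftrightarrow> phi \<in> borel_measurable borel \<and> continuous_on X phi \<and> bounded (phi ` X)"

definition exp_moment_bounded :: "'a::euclidean_space measure \<Rightarrow> bool" where
  "exp_moment_bounded M \<longleftrightarrow> (\<exists>C::real. \<forall>k::nat. (\<integral>\<^sup>+x. ennreal (norm x ^ k) \<partial>M) \<le> ennreal (C ^ k))"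

text \<open>int phi dF(mu) = int int (int phi dkappa(.|x,y)) dmu(x) dmu(y) for the gossip kernel.\<close>
definition gossip_gain ::
  "real \<Rightarrow> real \<Rightarrow> real \<Rightarrow> 'a::euclidean_space measure \<Rightarrow> ('a \<Rightarrow> real) \<Rightarrow> 'a measure \<Rightarrow> real" where
  "gossip_gain \<alpha> \<omega> \<upsilon> \<psi> phi \<mu> =
     (\<integral>y. (\<integral>x. \<alpha> * phi ((1 - \<omega>) *\<^sub>R x + \<omega> *\<^sub>R y)
               + (1 - \<alpha>) * (\<integral>z. phi ((1 - \<upsilon>) *\<^sub>R x + \<upsilon> *\<^sub>R z) \<partial>\<psi>) \<partial>\<mu>) \<partial>\<mu>)"

text \<open>Weak solution of d/dt mu_t = F(mu_t) - mu_t on [0,inf) (starting from mu 0).\<close>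
definition gossip_weak_solution ::
  "'a::euclidean_space set \<Rightarrow> real \<Rightarrow> real \<Rightarrow> real \<Rightarrow> 'a measure \<Rightarrow> (real \<Rightarrow> 'a measure) \<Rightarrow> bool" where
  "gossip_weak_solution X \<alpha> \<omega> \<upsilon> \<psi> \<mu> \<longleftrightarrow>
     (\<forall>t\<ge>0. prob_on X (\<mu> t)) \<and>
     (\<forall>phi. cb_test X phi \<longrightarrow> (\<forall>t\<ge>0.
        ((\<lambda>s. \<integral>x. phi x \<partial>\<mu> s) has_real_derivative
           (gossip_gain \<alpha> \<omega> \<upsilon> \<psi> phi (\<mu> t) - (\<integral>x. phi x \<partial>\<mu> t))) (at t within {0..})))"

definition weak_conv_at_top :: "'a::euclidean_space set \<Rightarrow> (real \<Rightarrow> 'a measure) \<Rightarrow> 'a measure \<Rightarrow> bool" where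
  "weak_conv_at_top X \<mu> \<nu> \<longleftrightarrow>
     (\<forall>phi. cb_test X phi \<longrightarrow> ((\<lambda>t. \<integral>x. phi x \<partial>\<mu> t) \<longlongrightarrow> (\<integral>x. phi x \<partial>\<nu>)) at_top)"

end

theory Submission
  imports Defs
begin

(*
  Let mu be the weak limit of the solution mu_t.  The proof has three steps.
  (1) mu is a fixed point of the gain operator F on bounded Lipschitz test
      functions: t |-> int phi dmu_t has derivative gain(phi, mu_t) - int phi dmu_t,
      which converges to gain(phi, mu) - int phi dmu because the gain is a double
      integral of a bounded, equi-Lipschitz integrand (tightness plus uniform
      convergence on compacts); a function with a limit cannot have a derivative
      tending to a nonzero constant.
  (2) Approximating the indicator of a compact Lebesgue-null set K by Lipschitz
      bumps, the fixed-point equation gives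
        mu(K) = alpha * int mu{x. (1-omega)x + omega y : K} dmu(y),
      because the environment term charges the null set {z. (1-upsilon)x + upsilon z : K}
      with psi-measure zero.  The sets in the integrand are again compact null
      sets (or, when omega = 1, the integral is mu(K)), so mu(K) <= alpha * M,
      where M is the supremum of mu over compact null sets.
  (3) Since alpha < 1 this forces M = 0, and inner regularity of mu transfers
      this from compact null sets to all Lebesgue null sets.
*)

section \<open>Bounded Lipschitz functions and integrals\<close>

text \<open>A real-valued function with Lipschitz constant L and sup-norm bound B; these are
  the test functions for which weak convergence is exploited.\<close>
definition bounded_lipschitz :: "real \<Rightarrow> real \<Rightarrow> ('a::metric_space \<Rightarrow> real) \<Rightarrow> bool" where
  "bounded_lipschitz L B f \<longleftrightarrow> 0 \<le> L \<and> (\<forall>x y. \<bar>f x - f y\<bar> \<le> L * dist x y) \<and> (\<forall>x. \<bar>f x\<bar> \<le> B)"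

lemma bounded_lipschitzD:
  assumes "bounded_lipschitz L B f"
  shows "0 \<le> L" "\<bar>f x - f y\<bar> \<le> L * dist x y" "\<bar>f x\<bar> \<le> B"
  using assms unfolding bounded_lipschitz_def by auto

lemma bounded_lipschitz_continuous: "bounded_lipschitz L B f \<Longrightarrow> continuous_on UNIV f"
  by (rule lipschitz_on_continuous_on[where L=L])
    (auto simp: lipschitz_on_def dist_real_def bounded_lipschitz_def)

lemma continuous_measurable_sets_borel:
  assumes "sets M = sets borel" "continuous_on UNIV f"
  shows "f \<in> borel_measurable M"
  using borel_measurable_continuous_onI[OF assms(2)] by (simp add: measurable_cong_sets[OF assms(1) refl])

lemma bounded_lipschitz_measurable:
  "sets M = sets borel \<Longrightarrow> bounded_lipschitz L B f \<Longrightarrow> f \<in> borel_measurable M"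
  by (rule continuous_measurable_sets_borel) (auto intro: bounded_lipschitz_continuous)

lemma prob_integrable_bounded:
  fixes f :: "'a \<Rightarrow> real"
  assumes "prob_space M" "f \<in> borel_measurable M" "\<And>x. \<bar>f x\<bar> \<le> B"
  shows "integrable M f"
proof -
  interpret prob_space M by fact
  show ?thesis using assms(2,3) by (intro integrable_const_bound[where B=B]) auto
qed

lemma prob_integral_abs_le:
  fixes f :: "'a \<Rightarrow> real"
  assumes M: "prob_space M" and f: "f \<in> borel_measurable M" "\<And>x. \<bar>f x\<bar> \<le> B"
  shows "\<bar>\<integral>x. f x \<partial>M\<bar> \<le> B"
proof -
  interpret prob_space M by (rule M)
  have "\<bar>\<integral>x. f x \<partial>M\<bar> \<le> (\<integral>x. \<bar>f x\<bar> \<partial>M)"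
    by (rule integral_abs_bound)
  also have "\<dots> \<le> (\<integral>x. B \<partial>M)"
    using assms order_trans[OF abs_ge_zero f(2)]
    by (intro integral_mono prob_integrable_bounded[where B=B]) auto
  also have "\<dots> = B"
    by (simp add: prob_space)
  finally show ?thesis .
qed

lemma bounded_lipschitz_integral:
  fixes g :: "'a \<Rightarrow> 'b::metric_space \<Rightarrow> real"
  assumes M: "prob_space M"
    and meas: "\<And>y. (\<lambda>x. g x y) \<in> borel_measurable M"
    and lip: "\<And>x. bounded_lipschitz L B (g x)"
  shows "bounded_lipschitz L B (\<lambda>y. \<integral>x. g x y \<partial>M)"
  unfolding bounded_lipschitz_def
proof (intro conjI allI)
  show "0 \<le> L" using bounded_lipschitzD(1)[OF lip] .
  fix y y'
  have "(\<integral>x. g x y \<partial>M) - (\<integral>x. g x y' \<partial>M) = (\<integral>x. g x y - g x y' \<partial>M)"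
    using M meas bounded_lipschitzD(3)[OF lip]
    by (intro Bochner_Integration.integral_diff[symmetric] prob_integrable_bounded) auto
  also have "\<bar>\<dots>\<bar> \<le> L * dist y y'"
    using M meas bounded_lipschitzD(2)[OF lip] by (intro prob_integral_abs_le) auto
  finally show "\<bar>(\<integral>x. g x y \<partial>M) - (\<integral>x. g x y' \<partial>M)\<bar> \<le> L * dist y y'" .
  show "\<bar>\<integral>x. g x y \<partial>M\<bar> \<le> B"
    using M meas bounded_lipschitzD(3)[OF lip] by (intro prob_integral_abs_le) auto
qed

lemma bounded_convergence:
  fixes s :: "nat \<Rightarrow> 'a \<Rightarrow> real"
  assumes fin: "finite_measure M"
    and meas: "\<And>n. s n \<in> borel_measurable M"
    and bound: "\<And>n x. x \<in> space M \<Longrightarrow> \<bar>s n x\<bar> \<le> C"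
    and lim: "\<And>x. x \<in> space M \<Longrightarrow> (\<lambda>n. s n x) \<longlonglongrightarrow> f x"
  shows "f \<in> borel_measurable M" "(\<lambda>n. \<integral>x. s n x \<partial>M) \<longlonglongrightarrow> (\<integral>x. f x \<partial>M)"
proof -
  show f: "f \<in> borel_measurable M"
    by (rule borel_measurable_LIMSEQ_real[OF lim meas])
  show "(\<lambda>n. \<integral>x. s n x \<partial>M) \<longlonglongrightarrow> (\<integral>x. f x \<partial>M)"
    using fin f meas bound lim
    by (intro integral_dominated_convergence[where w="\<lambda>_. C"])
      (auto simp: finite_measure.integrable_const)
qed

lemma prob_onD:
  assumes "prob_on X M"
  shows "prob_space M" "sets M = sets borel"
  using assms unfolding prob_on_def by auto

lemma continuous_bounded_cb_test:
  fixes f :: "'a::euclidean_space \<Rightarrow> real"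
  assumes "continuous_on UNIV f" "\<And>x. \<bar>f x\<bar> \<le> B"
  shows "cb_test X f"
  unfolding cb_test_def using assms continuous_on_subset[OF assms(1)]
  by (auto intro: borel_measurable_continuous_onI simp: bounded_iff)

lemma weak_conv_at_topD:
  fixes f :: "'a::euclidean_space \<Rightarrow> real"
  assumes "weak_conv_at_top X P Q" "continuous_on UNIV f" "\<And>x. \<bar>f x\<bar> \<le> B"
  shows "((\<lambda>t. \<integral>x. f x \<partial>P t) \<longlongrightarrow> (\<integral>x. f x \<partial>Q)) at_top"
  using assms(1) continuous_bounded_cb_test[OF assms(2,3)] unfolding weak_conv_at_top_def by blast

section \<open>Convergence of double integrals under weak convergence\<close>

definition cutoff :: "real \<Rightarrow> 'a::real_normed_vector \<Rightarrow> real" where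
  "cutoff R y = min 1 (max 0 (norm y - R))"

lemma cutoff_continuous: "continuous_on UNIV (cutoff R)"
  unfolding cutoff_def by (intro continuous_intros)

lemma cutoff_bounds: "0 \<le> cutoff R y" "\<bar>cutoff R y\<bar> \<le> 1"
  unfolding cutoff_def by auto

lemma cutoff_far: "R + 1 < norm y \<Longrightarrow> cutoff R y = 1"
  unfolding cutoff_def by auto

lemma cutoff_integral_small:
  fixes Q :: "'a::euclidean_space measure"
  assumes Q: "prob_space Q" "sets Q = sets borel" and e: "0 < e"
  obtains R where "(\<integral>y. cutoff R y \<partial>Q) < e"
proof -
  have "(\<lambda>n. \<integral>y. cutoff (real n) y \<partial>Q) \<longlonglongrightarrow> (\<integral>y. 0 \<partial>Q)"
  proof (rule bounded_convergence(2)[where C=1])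
    show "finite_measure Q" using Q(1) by (rule prob_space.finite_measure)
    show "cutoff (real n) \<in> borel_measurable Q" for n
      using Q(2) cutoff_continuous by (rule continuous_measurable_sets_borel)
    show "\<bar>cutoff (real n) y\<bar> \<le> 1" for n and y :: 'a by (rule cutoff_bounds)
    show "(\<lambda>n. cutoff (real n) y) \<longlonglongrightarrow> 0" for y :: 'a
    proof (rule tendsto_eventually)
      obtain N :: nat where "norm y \<le> real N" using real_arch_simple by blast
      then show "eventually (\<lambda>n. cutoff (real n) y = 0) sequentially"
        unfolding eventually_sequentially cutoff_def by (intro exI[of _ N]) auto
    qed
  qed
  from tendstoD[OF this e] obtain n where "dist (\<integral>y. cutoff (real n) y \<partial>Q) 0 < e"
    by (auto simp: eventually_sequentially)
  then show ?thesis by (intro that[of "real n"]) (simp add: dist_real_def)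
qed

lemma equi_lipschitz_uniform_on_compact:
  fixes F :: "'b \<Rightarrow> 'a::metric_space \<Rightarrow> real"
  assumes C: "compact C" and e: "0 < e" and L: "0 \<le> L"
    and equi: "eventually (\<lambda>t. \<forall>y y'. \<bar>F t y - F t y'\<bar> \<le> L * dist y y') net"
    and G: "\<And>y y'. \<bar>G y - G y'\<bar> \<le> L * dist y y'"
    and lim: "\<And>y. ((\<lambda>t. F t y) \<longlongrightarrow> G y) net"
  shows "eventually (\<lambda>t. \<forall>y\<in>C. \<bar>F t y - G y\<bar> < e) net"
proof -
  define \<delta> where "\<delta> = e / (3 * (L + 1))"
  have \<delta>: "0 < \<delta>" "L * \<delta> < e / 3"
    using e L unfolding \<delta>_def by (auto simp: field_simps)
  obtain D where D: "D \<subseteq> C" "finite D" "C \<subseteq> (\<Union>d\<in>D. ball d \<delta>)"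
    using C by (rule compactE_image[of C C "\<lambda>d. ball d \<delta>"]) (use \<delta> in auto)
  have "eventually (\<lambda>t. \<forall>d\<in>D. \<bar>F t d - G d\<bar> < e / 3) net"
  proof (rule eventually_ball_finite[OF D(2)], intro ballI)
    fix d
    show "eventually (\<lambda>t. \<bar>F t d - G d\<bar> < e / 3) net"
      using tendstoD[OF lim[of d], of "e / 3"] e by (simp add: dist_real_def)
  qed
  then show ?thesis
    using equi
  proof eventually_elim
    case (elim t)
    show ?case
    proof
      fix y assume "y \<in> C"
      then obtain d where d: "d \<in> D" "dist d y < \<delta>" using D(3) by auto
      have "L * dist d y \<le> L * \<delta>" using d L by (intro mult_left_mono) auto
      then have "\<bar>F t y - F t d\<bar> \<le> L * \<delta>" "\<bar>G d - G y\<bar> \<le> L * \<delta>"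
        using elim(2)[rule_format, of y d] G[of d y] by (auto simp: dist_commute)
      moreover have "\<bar>F t d - G d\<bar> < e / 3" using elim(1) d(1) by blast
      ultimately show "\<bar>F t y - G y\<bar> < e"
        using \<delta>(2) unfolding abs_le_iff abs_less_iff by linarith
    qed
  qed
qed

text \<open>Under weak convergence of P t to Q, integrals of a uniformly bounded, equi-Lipschitz
  family F t converging pointwise to G converge to the integral of G: the cutoff controls
  the tails uniformly in t and on the remaining ball the convergence is uniform.\<close>
lemma weak_conv_integral_equi_lipschitz:
  fixes F :: "real \<Rightarrow> 'a::euclidean_space \<Rightarrow> real"
  assumes P: "\<And>t. 0 \<le> t \<Longrightarrow> prob_on X (P t)" and Q: "prob_on X Q"
    and wc: "weak_conv_at_top X P Q"
    and F: "\<And>t. 0 \<le> t \<Longrightarrow> bounded_lipschitz L B (F t)" and G: "bounded_lipschitz L B G"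
    and lim: "\<And>y. ((\<lambda>t. F t y) \<longlongrightarrow> G y) at_top"
  shows "((\<lambda>t. \<integral>y. F t y \<partial>P t) \<longlongrightarrow> (\<integral>y. G y \<partial>Q)) at_top"
proof -
  note QD = prob_onD[OF Q]
  have L: "0 \<le> L" using bounded_lipschitzD(1)[OF G] .
  have "((\<lambda>t. (\<integral>y. F t y \<partial>P t) - (\<integral>y. G y \<partial>P t)) \<longlongrightarrow> 0) at_top"
  proof (rule tendstoI)
    fix e :: real assume e: "0 < e"
    define B' where "B' = \<bar>B\<bar> + 1"
    have B': "0 < B'" "B \<le> B'" unfolding B'_def by auto
    obtain R where R: "(\<integral>y. cutoff R y \<partial>Q) < e / (8 * B')"
      using cutoff_integral_small[OF QD(1,2)] e B' by (metis divide_pos_pos mult_pos_pos zero_less_numeral)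
    have tail: "eventually (\<lambda>t. (\<integral>y. cutoff R y \<partial>P t) < e / (8 * B')) at_top"
      using weak_conv_at_topD[OF wc cutoff_continuous cutoff_bounds(2)] R by (rule order_tendstoD)
    have "eventually (\<lambda>t. \<forall>y y'. \<bar>F t y - F t y'\<bar> \<le> L * dist y y') at_top"
      using eventually_ge_at_top[of 0] by eventually_elim (use F bounded_lipschitzD(2) in blast)
    then have unif: "eventually (\<lambda>t. \<forall>y\<in>cball 0 (R + 1). \<bar>F t y - G y\<bar> < e / 2) at_top"
      using e L bounded_lipschitzD(2)[OF G] lim
      by (intro equi_lipschitz_uniform_on_compact) auto
    show "eventually (\<lambda>t. dist ((\<integral>y. F t y \<partial>P t) - (\<integral>y. G y \<partial>P t)) 0 < e) at_top"
      using tail unif eventually_ge_at_top[of 0]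
    proof eventually_elim
      case (elim t)
      note PD = prob_onD[OF P[OF elim(3)]]
      interpret prob_space "P t" by (rule PD(1))
      have pointwise: "\<bar>F t y - G y\<bar> \<le> e / 2 + 2 * B' * cutoff R y" for y
      proof (cases "norm y \<le> R + 1")
        case True
        then have "\<bar>F t y - G y\<bar> < e / 2" using elim(2) by simp
        moreover have "0 \<le> 2 * B' * cutoff R y" using B' cutoff_bounds(1)[of R y] by simp
        ultimately show ?thesis by linarith
      next
        case False
        then show ?thesis
          using cutoff_far[of R y] bounded_lipschitzD(3)[OF F[OF elim(3)], of y]
            bounded_lipschitzD(3)[OF G, of y] B' e by auto
      qed
      have int_F: "integrable (P t) (F t)" and int_G: "integrable (P t) G"
        using PD F[OF elim(3)] G bounded_lipschitzD(3)
        by (auto intro!: prob_integrable_bounded bounded_lipschitz_measurable)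
      have int_cut: "integrable (P t) (cutoff R)"
        using PD(1) continuous_measurable_sets_borel[OF PD(2) cutoff_continuous] cutoff_bounds(2)
        by (rule prob_integrable_bounded)
      have "\<bar>(\<integral>y. F t y \<partial>P t) - (\<integral>y. G y \<partial>P t)\<bar> = \<bar>\<integral>y. F t y - G y \<partial>P t\<bar>"
        using int_F int_G by simp
      also have "\<dots> \<le> (\<integral>y. \<bar>F t y - G y\<bar> \<partial>P t)" by (rule integral_abs_bound)
      also have "\<dots> \<le> (\<integral>y. e / 2 + 2 * B' * cutoff R y \<partial>P t)"
        using int_F int_G int_cut pointwise by (intro integral_mono) auto
      also have "\<dots> = e / 2 + 2 * B' * (\<integral>y. cutoff R y \<partial>P t)"
        using int_cut by (simp add: prob_space)
      also have "\<dots> < e / 2 + 2 * B' * (e / (8 * B'))"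
        using mult_strict_left_mono[OF elim(1), of "2 * B'"] B' by simp
      also have "\<dots> < e" using B' e by (simp add: field_simps)
      finally show ?case by (simp add: dist_real_def)
    qed
  qed
  from tendsto_add[OF this weak_conv_at_topD[OF wc bounded_lipschitz_continuous[OF G]
        bounded_lipschitzD(3)[OF G]]]
  show ?thesis by simp
qed

lemma weak_conv_double_integral:
  fixes g :: "'a::euclidean_space \<Rightarrow> 'a \<Rightarrow> real"
  assumes P: "\<And>t. 0 \<le> t \<Longrightarrow> prob_on X (P t)" and Q: "prob_on X Q"
    and wc: "weak_conv_at_top X P Q"
    and gx: "\<And>y. bounded_lipschitz L B (\<lambda>x. g x y)" and gy: "\<And>x. bounded_lipschitz L B (g x)"
  shows "((\<lambda>t. \<integral>y. (\<integral>x. g x y \<partial>P t) \<partial>P t) \<longlongrightarrow> (\<integral>y. (\<integral>x. g x y \<partial>Q) \<partial>Q)) at_top"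
proof (rule weak_conv_integral_equi_lipschitz[OF P Q wc])
  have outer: "bounded_lipschitz L B (\<lambda>y. \<integral>x. g x y \<partial>M)" if "prob_on X M" for M
    using prob_onD[OF that] gx gy
    by (intro bounded_lipschitz_integral bounded_lipschitz_measurable) auto
  show "bounded_lipschitz L B (\<lambda>y. \<integral>x. g x y \<partial>P t)" if "0 \<le> t" for t
    using P[OF that] by (rule outer)
  show "bounded_lipschitz L B (\<lambda>y. \<integral>x. g x y \<partial>Q)"
    using Q by (rule outer)
  show "((\<lambda>t. \<integral>x. g x y \<partial>P t) \<longlongrightarrow> (\<integral>x. g x y \<partial>Q)) at_top" for y
    using gx by (intro weak_conv_at_topD[OF wc] bounded_lipschitz_continuous) (auto dest: bounded_lipschitzD)
qed

section \<open>A differentiable function with a limit has no nonzero limiting slope\<close>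

lemma limit_excludes_positive_slope:
  fixes f f' :: "real \<Rightarrow> real"
  assumes deriv: "\<And>t. 0 \<le> t \<Longrightarrow> (f has_real_derivative f' t) (at t within {0..})"
    and f: "(f \<longlongrightarrow> l) at_top" and f': "(f' \<longlongrightarrow> c) at_top" and c: "0 < c"
  shows False
proof -
  obtain T1 where T1: "\<And>t. T1 \<le> t \<Longrightarrow> c / 2 < f' t"
    using order_tendstoD(1)[OF f', of "c / 2"] c by (auto simp: eventually_at_top_linorder)
  obtain T2 where T2: "\<And>t. T2 \<le> t \<Longrightarrow> dist (f t) l < 1"
    using tendstoD[OF f, of 1] by (auto simp: eventually_at_top_linorder)
  define t1 where "t1 = max (max T1 T2) 0 + 1"
  define t2 where "t2 = t1 + 4 / c"
  have t12: "t1 < t2" "0 < t1" unfolding t2_def t1_def using c by auto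
  have "DERIV f x :> f' x" if "t1 \<le> x" for x
  proof -
    have "0 < x" using that t12 by simp
    then have "at x within {0..} = at x" by (intro at_within_interior) simp
    then show ?thesis using deriv[of x] \<open>0 < x\<close> by simp
  qed
  then obtain z where z: "t1 < z" "f t2 - f t1 = (t2 - t1) * f' z"
    using MVT2[OF t12(1)] by (metis less_eq_real_def)
  have "c / 2 < f' z" using z T1 unfolding t1_def by simp
  then have "(4 / c) * (c / 2) < (t2 - t1) * f' z"
    using c unfolding t2_def by (simp add: field_simps)
  then have "2 < f t2 - f t1" using z c by simp
  moreover have "dist (f t1) l < 1" "dist (f t2) l < 1"
    using T2 t12 unfolding t1_def by auto
  ultimately show False by (simp add: dist_real_def)
qed

lemma derivative_limit_zero:
  fixes f f' :: "real \<Rightarrow> real"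
  assumes deriv: "\<And>t. 0 \<le> t \<Longrightarrow> (f has_real_derivative f' t) (at t within {0..})"
    and f: "(f \<longlongrightarrow> l) at_top" and f': "(f' \<longlongrightarrow> c) at_top"
  shows "c = 0"
proof (rule ccontr)
  assume "c \<noteq> 0"
  then consider "0 < c" | "0 < - c" by linarith
  then show False
  proof cases
    case 1
    then show False using limit_excludes_positive_slope[OF deriv f f'] by blast
  next
    case 2
    have "((\<lambda>t. - f t) has_real_derivative - f' t) (at t within {0..})" if "0 \<le> t" for t
      using deriv[OF that] by (rule DERIV_minus)
    from limit_excludes_positive_slope[OF this tendsto_minus[OF f] tendsto_minus[OF f'] 2]
    show False .
  qed
qed

section \<open>The gossip kernel on bounded Lipschitz functions\<close>

definition env_avg :: "real \<Rightarrow> 'a::euclidean_space measure \<Rightarrow> ('a \<Rightarrow> real) \<Rightarrow> 'a \<Rightarrow> real" where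
  "env_avg \<upsilon> \<psi> phi x = (\<integral>z. phi ((1 - \<upsilon>) *\<^sub>R x + \<upsilon> *\<^sub>R z) \<partial>\<psi>)"

definition gossip_integrand ::
  "real \<Rightarrow> real \<Rightarrow> real \<Rightarrow> 'a::euclidean_space measure \<Rightarrow> ('a \<Rightarrow> real) \<Rightarrow> 'a \<Rightarrow> 'a \<Rightarrow> real" where
  "gossip_integrand \<alpha> \<omega> \<upsilon> \<psi> phi x y =
     \<alpha> * phi ((1 - \<omega>) *\<^sub>R x + \<omega> *\<^sub>R y) + (1 - \<alpha>) * env_avg \<upsilon> \<psi> phi x"

lemma gossip_gain_integrand:
  "gossip_gain \<alpha> \<omega> \<upsilon> \<psi> phi \<mu> = (\<integral>y. (\<integral>x. gossip_integrand \<alpha> \<omega> \<upsilon> \<psi> phi x y \<partial>\<mu>) \<partial>\<mu>)"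
  unfolding gossip_gain_def gossip_integrand_def env_avg_def ..

lemma bounded_lipschitz_affine:
  fixes phi :: "'a::real_normed_vector \<Rightarrow> real"
  assumes phi: "bounded_lipschitz L B phi" and c: "\<bar>c\<bar> \<le> 1"
  shows "bounded_lipschitz L B (\<lambda>x. phi (c *\<^sub>R x + w))"
  unfolding bounded_lipschitz_def
proof (intro conjI allI)
  fix x x'
  have "dist (c *\<^sub>R x + w) (c *\<^sub>R x' + w) = \<bar>c\<bar> * dist x x'"
    by (simp add: dist_norm scaleR_diff_right[symmetric])
  then have "\<bar>phi (c *\<^sub>R x + w) - phi (c *\<^sub>R x' + w)\<bar> \<le> L * (\<bar>c\<bar> * dist x x')"
    using bounded_lipschitzD(2)[OF phi, of "c *\<^sub>R x + w" "c *\<^sub>R x' + w"] by simp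
  also have "\<dots> \<le> L * dist x x'"
    using c bounded_lipschitzD(1)[OF phi] by (intro mult_left_mono mult_left_le_one_le) auto
  finally show "\<bar>phi (c *\<^sub>R x + w) - phi (c *\<^sub>R x' + w)\<bar> \<le> L * dist x x'" .
qed (use bounded_lipschitzD[OF phi] in auto)

lemma bounded_lipschitz_convex_comb:
  assumes a: "0 \<le> a" "a \<le> 1" and f: "bounded_lipschitz L B f" and g: "bounded_lipschitz L B g"
  shows "bounded_lipschitz L B (\<lambda>x. a * f x + (1 - a) * g x)"
proof -
  have comb: "\<bar>a * p + (1 - a) * q\<bar> \<le> a * \<bar>p\<bar> + (1 - a) * \<bar>q\<bar>" for p q :: real
    using a abs_triangle_ineq[of "a * p" "(1 - a) * q"] by (simp add: abs_mult)
  have comb_le: "\<bar>a * p + (1 - a) * q\<bar> \<le> C" if "\<bar>p\<bar> \<le> C" "\<bar>q\<bar> \<le> C" for p q C :: real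
  proof -
    have "a * \<bar>p\<bar> + (1 - a) * \<bar>q\<bar> \<le> a * C + (1 - a) * C"
      using a that by (intro add_mono mult_left_mono) auto
    with comb[of p q] show ?thesis by (simp add: algebra_simps)
  qed
  show ?thesis
    unfolding bounded_lipschitz_def
  proof (intro conjI allI)
    fix x y
    have "a * f x + (1 - a) * g x - (a * f y + (1 - a) * g y) = a * (f x - f y) + (1 - a) * (g x - g y)"
      by (simp add: algebra_simps)
    then show "\<bar>a * f x + (1 - a) * g x - (a * f y + (1 - a) * g y)\<bar> \<le> L * dist x y"
      using comb_le bounded_lipschitzD(2)[OF f] bounded_lipschitzD(2)[OF g] by metis
    show "\<bar>a * f x + (1 - a) * g x\<bar> \<le> B"
      using comb_le bounded_lipschitzD(3)[OF f] bounded_lipschitzD(3)[OF g] by metis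
  qed (use bounded_lipschitzD(1)[OF f] in auto)
qed

lemma env_avg_bounded_lipschitz:
  assumes \<psi>: "prob_space \<psi>" "sets \<psi> = sets borel"
    and phi: "bounded_lipschitz L B phi" and u: "0 \<le> \<upsilon>" "\<upsilon> \<le> 1"
  shows "bounded_lipschitz L B (env_avg \<upsilon> \<psi> phi)"
  unfolding env_avg_def
proof (rule bounded_lipschitz_integral[OF \<psi>(1)])
  show "(\<lambda>z. phi ((1 - \<upsilon>) *\<^sub>R x + \<upsilon> *\<^sub>R z)) \<in> borel_measurable \<psi>" for x
    using bounded_lipschitz_affine[OF phi, of \<upsilon> "(1 - \<upsilon>) *\<^sub>R x"] u
    by (intro bounded_lipschitz_measurable[OF \<psi>(2)]) (auto simp: add.commute)
  show "bounded_lipschitz L B (\<lambda>x. phi ((1 - \<upsilon>) *\<^sub>R x + \<upsilon> *\<^sub>R z))" for z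
    using u by (intro bounded_lipschitz_affine[OF phi]) auto
qed

lemma gossip_integrand_bounded_lipschitz:
  assumes \<psi>: "prob_space \<psi>" "sets \<psi> = sets borel" and phi: "bounded_lipschitz L B phi"
    and a: "0 \<le> \<alpha>" "\<alpha> \<le> 1" and w: "0 \<le> \<omega>" "\<omega> \<le> 1" and u: "0 \<le> \<upsilon>" "\<upsilon> \<le> 1"
  shows "bounded_lipschitz L B (\<lambda>x. gossip_integrand \<alpha> \<omega> \<upsilon> \<psi> phi x y)"
    and "bounded_lipschitz L B (gossip_integrand \<alpha> \<omega> \<upsilon> \<psi> phi x)"
proof -
  note env = env_avg_bounded_lipschitz[OF \<psi> phi u]
  show "bounded_lipschitz L B (\<lambda>x. gossip_integrand \<alpha> \<omega> \<upsilon> \<psi> phi x y)"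
    unfolding gossip_integrand_def using w
    by (intro bounded_lipschitz_convex_comb[OF a] bounded_lipschitz_affine[OF phi] env) auto
  have "bounded_lipschitz L B (\<lambda>y. env_avg \<upsilon> \<psi> phi x)"
    using bounded_lipschitzD[OF env] by (simp add: bounded_lipschitz_def)
  moreover have "bounded_lipschitz L B (\<lambda>y. phi (\<omega> *\<^sub>R y + (1 - \<omega>) *\<^sub>R x))"
    using w by (intro bounded_lipschitz_affine[OF phi]) auto
  ultimately show "bounded_lipschitz L B (gossip_integrand \<alpha> \<omega> \<upsilon> \<psi> phi x)"
    unfolding gossip_integrand_def[abs_def]
    by (subst add.commute) (rule bounded_lipschitz_convex_comb[OF a])
qed

lemma weak_limit_fixed_point:
  assumes a: "0 \<le> \<alpha>" "\<alpha> \<le> 1" and w: "0 \<le> \<omega>" "\<omega> \<le> 1" and u: "0 \<le> \<upsilon>" "\<upsilon> \<le> 1"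
    and \<psi>: "prob_on X \<psi>" and sol: "gossip_weak_solution X \<alpha> \<omega> \<upsilon> \<psi> \<mu>"
    and \<nu>: "prob_on X \<nu>" and wc: "weak_conv_at_top X \<mu> \<nu>"
    and phi: "bounded_lipschitz L B phi"
  shows "gossip_gain \<alpha> \<omega> \<upsilon> \<psi> phi \<nu> = (\<integral>x. phi x \<partial>\<nu>)"
proof -
  have P: "\<And>t. 0 \<le> t \<Longrightarrow> prob_on X (\<mu> t)"
    using sol unfolding gossip_weak_solution_def by blast
  note integrand = gossip_integrand_bounded_lipschitz[OF prob_onD(1,2)[OF \<psi>] phi a w u]
  have gain: "((\<lambda>t. gossip_gain \<alpha> \<omega> \<upsilon> \<psi> phi (\<mu> t)) \<longlongrightarrow> gossip_gain \<alpha> \<omega> \<upsilon> \<psi> phi \<nu>) at_top"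
    unfolding gossip_gain_integrand by (rule weak_conv_double_integral[OF P \<nu> wc integrand])
  have mean: "((\<lambda>t. \<integral>x. phi x \<partial>\<mu> t) \<longlongrightarrow> (\<integral>x. phi x \<partial>\<nu>)) at_top"
    using bounded_lipschitz_continuous[OF phi] bounded_lipschitzD(3)[OF phi]
    by (rule weak_conv_at_topD[OF wc])
  have "cb_test X phi"
    using bounded_lipschitz_continuous[OF phi] bounded_lipschitzD(3)[OF phi]
    by (rule continuous_bounded_cb_test)
  then have "((\<lambda>s. \<integral>x. phi x \<partial>\<mu> s) has_real_derivative
      gossip_gain \<alpha> \<omega> \<upsilon> \<psi> phi (\<mu> t) - (\<integral>x. phi x \<partial>\<mu> t)) (at t within {0..})" if "0 \<le> t" for t
    using sol that unfolding gossip_weak_solution_def by blast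
  from derivative_limit_zero[OF this mean tendsto_diff[OF gain mean]] show ?thesis by simp
qed

section \<open>Compact Lebesgue-null sets\<close>

lemma homothety_preimage_null:
  fixes K :: "'a::euclidean_space set"
  assumes K: "compact K" "K \<in> null_sets lborel" and c: "c \<noteq> 0"
  shows "{x. c *\<^sub>R x + w \<in> K} \<in> null_sets lborel" "compact {x. c *\<^sub>R x + w \<in> K}"
proof -
  define h where "h k = (1 / c) *\<^sub>R k + (- (1 / c) *\<^sub>R w)" for k :: 'a
  have pre: "{x. c *\<^sub>R x + w \<in> K} = h ` K"
  proof (intro set_eqI iffI)
    fix x assume "x \<in> {x. c *\<^sub>R x + w \<in> K}"
    then show "x \<in> h ` K"
      using c unfolding h_def by (intro image_eqI[of _ _ "c *\<^sub>R x + w"]) (auto simp: algebra_simps)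
  next
    fix x assume "x \<in> h ` K"
    moreover have "c *\<^sub>R h k + w = k" for k
      using c unfolding h_def by (simp add: scaleR_add_right scaleR_diff_right)
    ultimately show "x \<in> {x. c *\<^sub>R x + w \<in> K}" by auto
  qed
  show compact: "compact {x. c *\<^sub>R x + w \<in> K}"
    unfolding pre h_def using K(1) by (intro compact_continuous_image continuous_intros)
  have "emeasure lebesgue (h ` K) = \<bar>1 / c\<bar> ^ DIM('a) * emeasure lebesgue K"
    unfolding h_def by (rule emeasure_lebesgue_affine)
  also have "emeasure lebesgue K = 0"
    using K by (simp add: compact_imp_closed null_sets_def)
  finally show "{x. c *\<^sub>R x + w \<in> K} \<in> null_sets lborel"
    using compact unfolding pre by (simp add: compact_imp_closed null_sets_def)
qed

definition bump :: "'a::metric_space set \<Rightarrow> nat \<Rightarrow> 'a \<Rightarrow> real" where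
  "bump K n x = max 0 (1 - real (Suc n) * infdist x K)"

lemma bump_bounded_lipschitz: "bounded_lipschitz (real (Suc n)) 1 (bump K n)"
  unfolding bounded_lipschitz_def
proof (intro conjI allI)
  fix a b :: 'a
  have "\<bar>bump K n a - bump K n b\<bar> \<le> \<bar>real (Suc n) * infdist a K - real (Suc n) * infdist b K\<bar>"
    unfolding bump_def by linarith
  also have "\<dots> = real (Suc n) * \<bar>infdist a K - infdist b K\<bar>"
    by (simp add: abs_mult right_diff_distrib[symmetric])
  also have "\<dots> \<le> real (Suc n) * dist a b"
    by (intro mult_left_mono infdist_triangle_abs) auto
  finally show "\<bar>bump K n a - bump K n b\<bar> \<le> real (Suc n) * dist a b" .
  show "\<bar>bump K n a\<bar> \<le> 1"
    unfolding bump_def using infdist_nonneg[of a K] by auto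
qed simp

lemma bump_tendsto_indicator:
  assumes "closed K" "K \<noteq> {}"
  shows "(\<lambda>n. bump K n x) \<longlonglongrightarrow> indicator K x"
proof (cases "x \<in> K")
  case True
  then show ?thesis by (simp add: bump_def)
next
  case False
  then have d: "0 < infdist x K" using assms infdist_pos_not_in_closed by blast
  obtain N :: nat where N: "1 / infdist x K < real N" using reals_Archimedean2 by blast
  have "bump K n x = indicator K x" if "N \<le> n" for n
  proof -
    have "1 / infdist x K < real (Suc n)" using N that by simp
    then have "1 < real (Suc n) * infdist x K" using d by (simp add: field_simps)
    then show ?thesis using False by (simp add: bump_def)
  qed
  then show ?thesis
    by (intro tendsto_eventually) (auto simp: eventually_sequentially)
qed

lemma gossip_gain_bump_limit:
  fixes \<mu> \<psi> :: "'a::euclidean_space measure"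
  assumes \<mu>: "prob_space \<mu>" "sets \<mu> = sets borel" and \<psi>: "prob_space \<psi>" "sets \<psi> = sets borel"
    and a: "0 \<le> \<alpha>" "\<alpha> \<le> 1" and w: "0 \<le> \<omega>" "\<omega> \<le> 1" and u: "0 \<le> \<upsilon>" "\<upsilon> \<le> 1"
    and K: "closed K" "K \<noteq> {}"
  shows "(\<lambda>y. \<integral>x. gossip_integrand \<alpha> \<omega> \<upsilon> \<psi> (indicator K) x y \<partial>\<mu>) \<in> borel_measurable \<mu>"
    and "(\<lambda>n. gossip_gain \<alpha> \<omega> \<upsilon> \<psi> (bump K n) \<mu>) \<longlonglongrightarrow> gossip_gain \<alpha> \<omega> \<upsilon> \<psi> (indicator K) \<mu>"
proof -
  define g where "g n = gossip_integrand \<alpha> \<omega> \<upsilon> \<psi> (bump K n)" for n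
  note g_lip = gossip_integrand_bounded_lipschitz[OF \<psi> bump_bounded_lipschitz[of _ K] a w u, folded g_def]
  have fin: "finite_measure \<mu>" "finite_measure \<psi>"
    using \<mu>(1) \<psi>(1) by (auto intro: prob_space.finite_measure)
  have env: "(\<lambda>n. env_avg \<upsilon> \<psi> (bump K n) x) \<longlonglongrightarrow> env_avg \<upsilon> \<psi> (indicator K) x" for x
    unfolding env_avg_def
  proof (rule bounded_convergence(2)[OF fin(2), where C=1])
    show "(\<lambda>z. bump K n ((1 - \<upsilon>) *\<^sub>R x + \<upsilon> *\<^sub>R z)) \<in> borel_measurable \<psi>" for n
      using bounded_lipschitz_affine[OF bump_bounded_lipschitz[of n K], of \<upsilon> "(1 - \<upsilon>) *\<^sub>R x"] u
      by (intro bounded_lipschitz_measurable[OF \<psi>(2)]) (auto simp: add.commute)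
  qed (use bounded_lipschitzD(3)[OF bump_bounded_lipschitz] bump_tendsto_indicator[OF K] in auto)
  have inner: "(\<lambda>n. \<integral>x. g n x y \<partial>\<mu>) \<longlonglongrightarrow> (\<integral>x. gossip_integrand \<alpha> \<omega> \<upsilon> \<psi> (indicator K) x y \<partial>\<mu>)" for y
  proof (rule bounded_convergence(2)[OF fin(1), where C=1])
    show "(\<lambda>x. g n x y) \<in> borel_measurable \<mu>" for n
      using g_lip(1) by (rule bounded_lipschitz_measurable[OF \<mu>(2)])
    show "(\<lambda>n. g n x y) \<longlonglongrightarrow> gossip_integrand \<alpha> \<omega> \<upsilon> \<psi> (indicator K) x y" for x
      unfolding g_def gossip_integrand_def by (intro tendsto_intros env bump_tendsto_indicator[OF K])
  qed (use bounded_lipschitzD(3)[OF g_lip(1)] in auto)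
  have outer_meas: "(\<lambda>y. \<integral>x. g n x y \<partial>\<mu>) \<in> borel_measurable \<mu>" for n
    using \<mu> g_lip by (intro bounded_lipschitz_measurable[OF \<mu>(2)] bounded_lipschitz_integral)
      (auto intro: bounded_lipschitz_measurable)
  have outer_bound: "\<bar>\<integral>x. g n x y \<partial>\<mu>\<bar> \<le> 1" for n y
    using \<mu>(1) g_lip(1)[THEN bounded_lipschitz_measurable[OF \<mu>(2)]] bounded_lipschitzD(3)[OF g_lip(1)]
    by (rule prob_integral_abs_le)
  note outer = bounded_convergence[OF fin(1) outer_meas outer_bound inner]
  show "(\<lambda>y. \<integral>x. gossip_integrand \<alpha> \<omega> \<upsilon> \<psi> (indicator K) x y \<partial>\<mu>) \<in> borel_measurable \<mu>"
    by (rule outer(1))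
  show "(\<lambda>n. gossip_gain \<alpha> \<omega> \<upsilon> \<psi> (bump K n) \<mu>) \<longlonglongrightarrow> gossip_gain \<alpha> \<omega> \<upsilon> \<psi> (indicator K) \<mu>"
    unfolding gossip_gain_integrand g_def[symmetric] by (rule outer(2))
qed

section \<open>Fixed points do not charge compact null sets\<close>

text \<open>The environment term
  vanishes since \<open>\<psi>\<close> does not charge null sets, and the interaction term is an average of
  masses of compact null sets (or of K itself, when \<open>\<omega> = 1\<close>).\<close>
lemma compact_null_contraction:
  fixes \<mu> \<psi> :: "'a::euclidean_space measure"
  assumes \<mu>: "prob_space \<mu>" "sets \<mu> = sets borel" and \<psi>: "prob_space \<psi>" "sets \<psi> = sets borel"
    and ac: "absolutely_continuous lborel \<psi>"
    and a: "0 \<le> \<alpha>" "\<alpha> \<le> 1" and w: "0 \<le> \<omega>" "\<omega> \<le> 1" and u: "0 < \<upsilon>" "\<upsilon> \<le> 1"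
    and fixed: "\<And>n. gossip_gain \<alpha> \<omega> \<upsilon> \<psi> (bump K n) \<mu> = (\<integral>x. bump K n x \<partial>\<mu>)"
    and K: "compact K" "K \<in> null_sets lborel"
    and M: "\<And>K'. compact K' \<Longrightarrow> K' \<in> null_sets lborel \<Longrightarrow> measure \<mu> K' \<le> M"
  shows "measure \<mu> K \<le> \<alpha> * M"
proof (cases "K = {}")
  case True
  then show ?thesis using M[of "{}"] a by simp
next
  case nonempty: False
  interpret \<mu>: prob_space \<mu> by (rule \<mu>(1))
  have space: "space \<mu> = UNIV" "space \<psi> = UNIV"
    using \<mu>(2) \<psi>(2) by (auto dest: sets_eq_imp_space_eq)
  note limit = gossip_gain_bump_limit[OF \<mu> \<psi> a w less_imp_le[OF u(1)] u(2)
      compact_imp_closed[OF K(1)] nonempty]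
  define S where "S y = {x. (1 - \<omega>) *\<^sub>R x + \<omega> *\<^sub>R y \<in> K}" for y
  have env_zero: "env_avg \<upsilon> \<psi> (indicator K) x = 0" for x
  proof -
    define Z where "Z = {z. (1 - \<upsilon>) *\<^sub>R x + \<upsilon> *\<^sub>R z \<in> K}"
    have "Z \<in> null_sets lborel"
      using homothety_preimage_null(1)[OF K, of \<upsilon> "(1 - \<upsilon>) *\<^sub>R x"] u
      unfolding Z_def by (simp add: add.commute)
    then have Z: "Z \<in> null_sets \<psi>"
      using ac unfolding absolutely_continuous_def by auto
    have "env_avg \<upsilon> \<psi> (indicator K) x = (\<integral>z. indicator Z z \<partial>\<psi>)"
      unfolding env_avg_def Z_def by (simp add: indicator_def)
    also have "\<dots> = measure \<psi> Z"
      using space by simp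
    also have "\<dots> = 0"
      using Z by (simp add: measure_def null_setsD1)
    finally show ?thesis .
  qed
  have inner: "(\<integral>x. gossip_integrand \<alpha> \<omega> \<upsilon> \<psi> (indicator K) x y \<partial>\<mu>) = \<alpha> * measure \<mu> (S y)" for y
  proof -
    have "(\<integral>x. gossip_integrand \<alpha> \<omega> \<upsilon> \<psi> (indicator K) x y \<partial>\<mu>) = (\<integral>x. \<alpha> * indicator (S y) x \<partial>\<mu>)"
      unfolding gossip_integrand_def env_zero S_def by (simp add: indicator_def)
    then show ?thesis using space by simp
  qed
  have "(\<lambda>n. \<integral>x. bump K n x \<partial>\<mu>) \<longlonglongrightarrow> (\<integral>x. indicator K x \<partial>\<mu>)"
    using bump_bounded_lipschitz[THEN bounded_lipschitz_measurable[OF \<mu>(2)]]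
      bounded_lipschitzD(3)[OF bump_bounded_lipschitz] bump_tendsto_indicator[OF compact_imp_closed[OF K(1)] nonempty]
    by (intro bounded_convergence(2)[where C=1]) auto
  then have "(\<lambda>n. gossip_gain \<alpha> \<omega> \<upsilon> \<psi> (bump K n) \<mu>) \<longlonglongrightarrow> measure \<mu> K"
    using space by (simp add: fixed)
  then have "measure \<mu> K = gossip_gain \<alpha> \<omega> \<upsilon> \<psi> (indicator K) \<mu>"
    using limit(2) by (rule LIMSEQ_unique)
  also have "\<dots> = (\<integral>y. \<alpha> * measure \<mu> (S y) \<partial>\<mu>)"
    unfolding gossip_gain_integrand inner ..
  also have "\<dots> \<le> \<alpha> * M"
  proof (cases "\<omega> = 1")
    case True
    then have "measure \<mu> (S y) = indicator K y" for y
      unfolding S_def using space \<mu>.prob_space by (simp add: indicator_def)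
    then have "(\<integral>y. \<alpha> * measure \<mu> (S y) \<partial>\<mu>) = \<alpha> * measure \<mu> K"
      using space by simp
    also have "\<dots> \<le> \<alpha> * M" using M[OF K] a by (intro mult_left_mono) auto
    finally show ?thesis .
  next
    case False
    have "measure \<mu> (S y) \<le> M" for y
      unfolding S_def using False w by (intro M homothety_preimage_null[OF K]) auto
    moreover have "integrable \<mu> (\<lambda>y. \<alpha> * measure \<mu> (S y))"
      using limit(1) a by (intro prob_integrable_bounded[OF \<mu>(1), where B=1])
        (auto simp: inner abs_mult mult_le_one)
    ultimately have "(\<integral>y. \<alpha> * measure \<mu> (S y) \<partial>\<mu>) \<le> (\<integral>y. \<alpha> * M \<partial>\<mu>)"
      using a by (intro integral_mono mult_left_mono) auto
    then show ?thesis by (simp add: \<mu>.prob_space)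
  qed
  finally show ?thesis .
qed

lemma contraction_of_supremum_zero:
  fixes f :: "'b \<Rightarrow> real"
  assumes x: "x \<in> A" and nonneg: "\<And>y. y \<in> A \<Longrightarrow> 0 \<le> f y"
    and bdd: "bdd_above (f ` A)" and \<alpha>: "\<alpha> < 1"
    and contr: "\<And>y. y \<in> A \<Longrightarrow> f y \<le> \<alpha> * (SUP y\<in>A. f y)"
  shows "f x = 0"
proof -
  have "(SUP y\<in>A. f y) \<le> \<alpha> * (SUP y\<in>A. f y)"
    using x contr by (intro cSUP_least) auto
  then have "(SUP y\<in>A. f y) \<le> 0"
    using \<alpha> by (smt (verit) mult_le_cancel_right1)
  moreover have "f x \<le> (SUP y\<in>A. f y)"
    using x bdd by (rule cSUP_upper)
  ultimately show ?thesis using nonneg[OF x] by linarith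
qed

text \<open>By inner regularity, a finite Borel measure vanishing on compact Lebesgue-null sets
  is absolutely continuous with respect to Lebesgue measure.\<close>
lemma absolutely_continuous_if_compact_null:
  fixes \<mu> :: "'a::euclidean_space measure"
  assumes \<mu>: "sets \<mu> = sets borel" "emeasure \<mu> (space \<mu>) \<noteq> \<infinity>"
    and zero: "\<And>K. compact K \<Longrightarrow> K \<in> null_sets lborel \<Longrightarrow> emeasure \<mu> K = 0"
  shows "absolutely_continuous lborel \<mu>"
  unfolding absolutely_continuous_def
proof
  fix N :: "'a set" assume N: "N \<in> null_sets lborel"
  then have borel: "N \<in> sets borel" by auto
  have "emeasure \<mu> N = (SUP K \<in> {K. K \<subseteq> N \<and> compact K}. emeasure \<mu> K)"
    using \<mu> borel by (rule inner_regular)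
  also have "\<dots> = 0"
  proof (intro antisym SUP_least)
    fix K assume "K \<in> {K. K \<subseteq> N \<and> compact K}"
    then have "compact K" "K \<in> null_sets lborel"
      using null_sets_subset[OF N] by (auto intro: borel_compact)
    then show "emeasure \<mu> K \<le> 0" by (simp add: zero)
  qed simp
  finally show "N \<in> null_sets \<mu>" using borel \<mu>(1) by (simp add: null_sets_def)
qed

theorem proposition4p3:
  fixes X :: "'a::euclidean_space set"
    and \<alpha> \<omega> \<upsilon> :: real
    and \<psi> \<mu>inf :: "'a measure"
    and \<mu> :: "real \<Rightarrow> 'a measure"
  assumes "convex X" and "open X"
    and "0 \<le> \<alpha>" and "\<alpha> < 1" and "0 \<le> \<omega>" and "\<omega> \<le> 1" and "0 < \<upsilon>" and "\<upsilon> \<le> 1"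
    and "prob_on X \<psi>"
    and "exp_moment_bounded (\<mu> 0)" and "exp_moment_bounded \<psi>"
    and "gossip_weak_solution X \<alpha> \<omega> \<upsilon> \<psi> \<mu>"
    and "prob_on X \<mu>inf" and "weak_conv_at_top X \<mu> \<mu>inf"
    and "absolutely_continuous lborel \<psi>"
  shows "absolutely_continuous lborel \<mu>inf"
proof -
  note \<mu>inf = prob_onD[OF assms(13)] and \<psi> = prob_onD[OF assms(9)]
  interpret prob_space \<mu>inf by (rule \<mu>inf(1))
  define A :: "'a set set" where "A = {K. compact K \<and> K \<in> null_sets lborel}"
  have fixed: "gossip_gain \<alpha> \<omega> \<upsilon> \<psi> (bump K n) \<mu>inf = (\<integral>x. bump K n x \<partial>\<mu>inf)" for K n
    using assms(3-8)
    by (intro weak_limit_fixed_point[OF _ _ _ _ _ _ assms(9,12-14) bump_bounded_lipschitz]) auto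
  have bdd: "bdd_above (measure \<mu>inf ` A)"
    by (auto intro: bdd_aboveI[of _ 1])
  have "measure \<mu>inf K = 0" if "K \<in> A" for K
  proof (rule contraction_of_supremum_zero[OF that _ bdd assms(4)])
    show "measure \<mu>inf K' \<le> \<alpha> * (SUP K\<in>A. measure \<mu>inf K)" if "K' \<in> A" for K'
      using that assms(3-8,15) \<mu>inf \<psi> bdd
      by (intro compact_null_contraction[OF _ _ _ _ _ _ _ _ _ _ _ fixed]) (auto simp: A_def intro!: cSUP_upper)
  qed simp
  then show ?thesis
    using \<mu>inf(2) by (intro absolutely_continuous_if_compact_null) (auto simp: A_def emeasure_eq_measure)
qed

end
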